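(* Let $1\le r\le 8$, let $k$ be a positive integer, let $D\in|k(3H-E_1-\dots-E_r)|$ be an effective divisor on $\mathbb{S}_r$ and let $Q\in\mathbb{S}_r$. Write $f(D)$ for the image plane curve (of degree $3k$). If $Q\in E_1\cup\dots\cup E_r$, then $$\mathrm{mult}_Q(D)\le 2\,\mathrm{mult}_{f(Q)}(f(D))-k.$$ If $Q\notin E_1\cup\dots\cup E_r$, then $$\mathrm{mult}_Q(D)=\mathrm{mult}_{f(Q)}(f(D))\le 3k,$$ and if equality $\mathrm{mult}_Q(D)=3k$ holds, then $f(D)$ is a union of lines through $f(Q)$.
   Context: Let $P_1,\dots,P_r\in\mathbb{P}^2(\mathbb{C})$ be $r$ general points and $f\colon\mathbb{S}_r\to\mathbb{P}^2$ the blow-up at them, with exceptional curves $E_i=f^{-1}(P_i)$; $H$ is the pullback of the class of a line. For a divisor $D\in|k(3H-E_1-\dots-E_r)|$, $f(D)$ denotes the plane curve $f_*D$ of degree $3k$, so that $D=f^*(f(D))-kE_1-\dots-kE_r$. *)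

theory Defs
  imports Complex_Main
begin

text \<open>Points of P^2 are nonzero triples of complex numbers (up to scaling).
  A plane curve of degree d is given by a nonzero homogeneous polynomial of degree d,
  represented as a polynomial function of three complex variables.\<close>

type_synonym pt3 = "complex \<times> complex \<times> complex"
type_synonym form3 = "complex \<Rightarrow> complex \<Rightarrow> complex \<Rightarrow> complex"

definition hom_poly :: "nat \<Rightarrow> form3 \<Rightarrow> bool" where
  "hom_poly d F \<longleftrightarrow> (\<exists>c :: nat \<Rightarrow> nat \<Rightarrow> complex.
     F = (\<lambda>x y z. \<Sum>(i,j)\<in>{(i,j). i + j \<le> d}. c i j * x ^ i * y ^ j * z ^ (d - i - j)))"

definition eval3 :: "form3 \<Rightarrow> pt3 \<Rightarrow> complex" where
  "eval3 F p = (case p of (x, y, z) \<Rightarrow> F x y z)"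

definition proj_eq :: "pt3 \<Rightarrow> pt3 \<Rightarrow> bool" where
  "proj_eq p q \<longleftrightarrow> p \<noteq> (0,0,0) \<and> q \<noteq> (0,0,0) \<and>
     (\<exists>c. c \<noteq> 0 \<and> fst q = c * fst p \<and> fst (snd q) = c * fst (snd p)
                  \<and> snd (snd q) = c * snd (snd p))"

definition poly2 :: "(nat \<Rightarrow> nat \<Rightarrow> complex) \<Rightarrow> complex \<Rightarrow> complex \<Rightarrow> complex" where
  "poly2 c s t = (\<Sum>(i,j)\<in>{(i,j). c i j \<noteq> 0}. c i j * s ^ i * t ^ j)"

definition ord_at :: "(complex \<Rightarrow> complex \<Rightarrow> complex) \<Rightarrow> complex \<Rightarrow> complex \<Rightarrow> nat" where
  "ord_at h a b = (LEAST m. \<exists>c. finite {(i,j). c i j \<noteq> 0}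
       \<and> (\<forall>s t. h (a + s) (b + t) = poly2 c s t)
       \<and> (\<exists>i j. i + j = m \<and> c i j \<noteq> 0))"

text \<open>Affine equation of the curve F in the standard affine chart containing p
  (first nonzero coordinate set to 1), in affine coordinates centred at p.\<close>

definition chart_eq :: "form3 \<Rightarrow> pt3 \<Rightarrow> complex \<Rightarrow> complex \<Rightarrow> complex" where
  "chart_eq F p = (case p of (p0, p1, p2) \<Rightarrow>
      if p0 \<noteq> 0 then (\<lambda>u v. F 1 (p1 / p0 + u) (p2 / p0 + v))
      else if p1 \<noteq> 0 then (\<lambda>u v. F u 1 (p2 / p1 + v))
      else (\<lambda>u v. F u v 1))"

definition mult_P2 :: "form3 \<Rightarrow> pt3 \<Rightarrow> nat" where
  "mult_P2 F p = ord_at (chart_eq F p) 0 0"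

definition general_position :: "nat \<Rightarrow> (nat \<Rightarrow> pt3) \<Rightarrow> bool" where
  "general_position r P \<longleftrightarrow>
     (\<forall>i\<in>{1..r}. P i \<noteq> (0,0,0)) \<and>
     (\<forall>i\<in>{1..r}. \<forall>j\<in>{1..r}. i \<noteq> j \<longrightarrow> \<not> proj_eq (P i) (P j)) \<and>
     (\<forall>S \<subseteq> {1..r}. card S = 3 \<longrightarrow>
        \<not> (\<exists>G. hom_poly 1 G \<and> G \<noteq> (\<lambda>x y z. 0) \<and> (\<forall>i\<in>S. eval3 G (P i) = 0))) \<and>
     (\<forall>S \<subseteq> {1..r}. card S = 6 \<longrightarrow>
        \<not> (\<exists>G. hom_poly 2 G \<and> G \<noteq> (\<lambda>x y z. 0) \<and> (\<forall>i\<in>S. eval3 G (P i) = 0))) \<and>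
     (\<forall>S \<subseteq> {1..r}. card S = 8 \<longrightarrow>
        \<not> (\<exists>G. hom_poly 3 G \<and> G \<noteq> (\<lambda>x y z. 0) \<and> (\<forall>i\<in>S. eval3 G (P i) = 0)
              \<and> (\<exists>j\<in>S. 2 \<le> mult_P2 G (P j))))"

text \<open>Points of the blow-up S_r: either a point q of P^2 distinct from all P_i, or a point
  of the exceptional curve E_i, i.e. a tangent direction (alpha,beta) at P_i, expressed in
  the affine coordinates (u,v) of the standard chart centred at P_i.\<close>
datatype bpt = Off pt3 | Exc nat "complex \<times> complex"

definition point_of_Sr :: "nat \<Rightarrow> (nat \<Rightarrow> pt3) \<Rightarrow> bpt \<Rightarrow> bool" where
  "point_of_Sr r P Q = (case Q of
      Off q \<Rightarrow> q \<noteq> (0,0,0) \<and> (\<forall>i\<in>{1..r}. \<not> proj_eq q (P i))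
    | Exc i d \<Rightarrow> i \<in> {1..r} \<and> d \<noteq> (0,0))"

definition on_exc :: "bpt \<Rightarrow> bool" where
  "on_exc Q = (case Q of Off q \<Rightarrow> False | Exc i d \<Rightarrow> True)"

definition fmap :: "(nat \<Rightarrow> pt3) \<Rightarrow> bpt \<Rightarrow> pt3" where
  "fmap P Q = (case Q of Off q \<Rightarrow> q | Exc i d \<Rightarrow> P i)"

text \<open>Multiplicity at Q of the divisor D = f^*(C_F) - k E_1 - ... - k E_r on S_r, where C_F is
  the plane curve F = 0.  Near a point of E_i we use the standard blow-up charts
  (s,t) |-> (u,v) = (s, s t) resp. (s t, t), where E_i is s = 0 resp. t = 0 and the local
  equation of f^*(C_F) is the pull-back of the affine equation; subtracting k E_i lowers
  the multiplicity by k (E_i is smooth, and no other E_j passes through Q).\<close>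
definition mult_Sr :: "nat \<Rightarrow> form3 \<Rightarrow> (nat \<Rightarrow> pt3) \<Rightarrow> bpt \<Rightarrow> int" where
  "mult_Sr k F P Q = (case Q of
      Off q \<Rightarrow> int (mult_P2 F q)
    | Exc i (\<alpha>, \<beta>) \<Rightarrow>
        (if \<alpha> \<noteq> 0 then int (ord_at (\<lambda>s t. chart_eq F (P i) s (s * t)) 0 (\<beta> / \<alpha>))
         else int (ord_at (\<lambda>s t. chart_eq F (P i) (s * t) t) 0 0)) - int k)"

definition union_of_lines_through :: "form3 \<Rightarrow> pt3 \<Rightarrow> bool" where
  "union_of_lines_through F q \<longleftrightarrow> (\<exists>c (ls :: pt3 list). c \<noteq> 0 \<and>
      (\<forall>l\<in>set ls. l \<noteq> (0,0,0) \<and> eval3 (\<lambda>x y z. fst l * x + fst (snd l) * y + snd (snd l) * z) q = 0) \<and>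
      F = (\<lambda>x y z. c * (\<Prod>l\<leftarrow>ls. fst l * x + fst (snd l) * y + snd (snd l) * z)))"

end

theory Submission
  imports Defs "HOL-Computational_Algebra.Fundamental_Theorem_Algebra"
begin

(* In the affine chart centred at P the curve is a polynomial f of degree at most deg F whose
   lowest-order nonzero terms have degree m = mult_P(F), so m <= deg F.  If m = deg F, then f is
   a binary form; rehomogenising, F is that binary form evaluated at two independent linear forms
   vanishing at P, and over C it splits into linear factors.
   In the blow-up chart (u, v) = (s, s t) the monomial u^i v^j becomes s^(i+j) t^j, so a
   lowest-order term of f yields a term of order at most m + j <= 2m of the pull-back, also after
   recentring t; the chart (u, v) = (s t, t) is similar.  Hence mult_Q(f^* C) <= 2m, and
   subtracting k E_i gives mult_Q(D) <= 2m - k. *)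

definition supp2 :: "(nat \<Rightarrow> nat \<Rightarrow> complex) \<Rightarrow> (nat \<times> nat) set" where
  "supp2 c = {(i, j). c i j \<noteq> 0}"

lemma poly2_supp2: "poly2 c s t = (\<Sum>(i, j)\<in>supp2 c. c i j * s ^ i * t ^ j)"
  unfolding poly2_def supp2_def ..

lemma poly2_eq_sum_superset:
  assumes "finite A" "supp2 c \<subseteq> A"
  shows "poly2 c s t = (\<Sum>(i, j)\<in>A. c i j * s ^ i * t ^ j)"
  unfolding poly2_supp2 by (rule sum.mono_neutral_left) (use assms in \<open>auto simp: supp2_def\<close>)

lemma finite_supp2_bounded:
  assumes "finite (supp2 c)"
  obtains N where "supp2 c \<subseteq> {..N} \<times> {..N}"
proof -
  have "finite (fst ` supp2 c \<union> snd ` supp2 c)"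
    using assms by simp
  then obtain N where "\<forall>x\<in>fst ` supp2 c \<union> snd ` supp2 c. x \<le> N"
    unfolding finite_nat_set_iff_bounded_le by blast
  then show ?thesis
    by (intro that[of N]) force
qed

lemma poly2_eq_0_imp_coeff_eq_0:
  assumes "finite (supp2 c)" "\<And>s t. poly2 c s t = 0"
  shows "c i j = 0"
proof -
  obtain N where N: "supp2 c \<subseteq> {..N} \<times> {..N}"
    using finite_supp2_bounded[OF assms(1)] .
  have "(\<Sum>i\<le>N. (\<Sum>j\<le>N. c i j * t ^ j) * s ^ i) = 0" for s t
  proof -
    have "(\<Sum>i\<le>N. (\<Sum>j\<le>N. c i j * t ^ j) * s ^ i) = (\<Sum>(i, j)\<in>{..N} \<times> {..N}. c i j * s ^ i * t ^ j)"
      by (simp add: sum.cartesian_product[symmetric] sum_distrib_left sum_distrib_right mult_ac)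
    also have "\<dots> = 0"
      using poly2_eq_sum_superset[OF _ N] assms(2) by simp
    finally show ?thesis .
  qed
  then have "(\<Sum>j\<le>N. c i j * t ^ j) = 0" if "i \<le> N" for i t
    using that polyfun_eq_0[of "\<lambda>i. \<Sum>j\<le>N. c i j * t ^ j" N] by blast
  then have "c i j = 0" if "i \<le> N" "j \<le> N"
    using that polyfun_eq_0[of "c i" N] by blast
  then show ?thesis
    using N by (cases "i \<le> N \<and> j \<le> N") (auto simp: supp2_def)
qed

lemma poly2_coeffs_unique:
  assumes "finite (supp2 c)" "finite (supp2 d)" "\<And>s t. poly2 c s t = poly2 d s t"
  shows "c = d"
proof -
  let ?A = "supp2 c \<union> supp2 d"
  have sub: "supp2 (\<lambda>i j. c i j - d i j) \<subseteq> ?A"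
    by (auto simp: supp2_def)
  have fin: "finite ?A"
    using assms(1,2) by blast
  have "poly2 (\<lambda>i j. c i j - d i j) s t = poly2 c s t - poly2 d s t" for s t
    unfolding poly2_eq_sum_superset[OF fin sub] poly2_eq_sum_superset[OF fin Un_upper1]
      poly2_eq_sum_superset[OF fin Un_upper2]
    unfolding sum_subtractf[symmetric] by (intro sum.cong) (auto simp: algebra_simps)
  then have "c i j - d i j = 0" for i j
    using poly2_eq_0_imp_coeff_eq_0[OF finite_subset[OF sub fin]] assms(3) by simp
  then show ?thesis
    by (simp add: fun_eq_iff)
qed

lemma ord_at_le:
  assumes "finite (supp2 c)" "\<And>s t. h (a + s) (b + t) = poly2 c s t" "c i j \<noteq> 0"
  shows "ord_at h a b \<le> i + j"
  unfolding ord_at_def by (rule Least_le) (use assms in \<open>auto simp: supp2_def\<close>)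

lemma ord_at_attained:
  assumes "finite (supp2 c)" "\<And>s t. h (a + s) (b + t) = poly2 c s t" "c i j \<noteq> 0"
  obtains i' j' where "c i' j' \<noteq> 0" "i' + j' = ord_at h a b"
proof -
  have "\<exists>c'. finite {(i, j). c' i j \<noteq> 0} \<and> (\<forall>s t. h (a + s) (b + t) = poly2 c' s t)
      \<and> (\<exists>i j. i + j = ord_at h a b \<and> c' i j \<noteq> 0)"
    unfolding ord_at_def by (rule LeastI[of _ "i + j"]) (use assms in \<open>auto simp: supp2_def\<close>)
  then obtain c' where c': "finite (supp2 c')" "\<And>s t. h (a + s) (b + t) = poly2 c' s t"
      "\<exists>i j. i + j = ord_at h a b \<and> c' i j \<noteq> 0"
    by (auto simp: supp2_def)
  have "c' = c"
    using poly2_coeffs_unique[OF c'(1) assms(1)] c'(2) assms(2) by metis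
  with c'(3) that show ?thesis
    by blast
qed

definition monomial_coeffs ::
    "('a \<Rightarrow> nat \<times> nat) \<Rightarrow> 'a set \<Rightarrow> ('a \<Rightarrow> complex) \<Rightarrow> nat \<Rightarrow> nat \<Rightarrow> complex" where
  "monomial_coeffs \<phi> A g i j = (if (i, j) \<in> \<phi> ` A then g (the_inv_into A \<phi> (i, j)) else 0)"

lemma supp2_monomial_coeffs: "supp2 (monomial_coeffs \<phi> A g) \<subseteq> \<phi> ` A"
  by (auto simp: supp2_def monomial_coeffs_def split: if_splits)

lemma finite_supp2_monomial_coeffs: "finite A \<Longrightarrow> finite (supp2 (monomial_coeffs \<phi> A g))"
  by (rule finite_subset[OF supp2_monomial_coeffs finite_imageI])

lemma monomial_coeffs_eq:
  assumes "inj_on \<phi> A" "x \<in> A" "\<phi> x = (i, j)"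
  shows "monomial_coeffs \<phi> A g i j = g x"
proof -
  have "(i, j) \<in> \<phi> ` A"
    using assms(2,3) by force
  then show ?thesis
    using assms by (simp add: monomial_coeffs_def the_inv_into_f_eq)
qed

lemma monomial_coeffs_nonzeroE:
  assumes "inj_on \<phi> A" "monomial_coeffs \<phi> A g i j \<noteq> 0"
  obtains x where "x \<in> A" "\<phi> x = (i, j)" "g x \<noteq> 0"
  using assms by (auto simp: monomial_coeffs_def the_inv_into_f_eq split: if_splits)

lemma poly2_monomial_coeffs:
  assumes "finite A" "inj_on \<phi> A"
  shows "poly2 (monomial_coeffs \<phi> A g) s t = (\<Sum>x\<in>A. g x * s ^ fst (\<phi> x) * t ^ snd (\<phi> x))"
proof -
  have "poly2 (monomial_coeffs \<phi> A g) s t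
      = (\<Sum>(i, j)\<in>\<phi> ` A. monomial_coeffs \<phi> A g i j * s ^ i * t ^ j)"
    using assms(1) by (intro poly2_eq_sum_superset supp2_monomial_coeffs) simp
  also have "\<dots> = (\<Sum>x\<in>A. g x * s ^ fst (\<phi> x) * t ^ snd (\<phi> x))"
    using assms(2) by (simp add: sum.reindex case_prod_unfold monomial_coeffs_eq)
  finally show ?thesis .
qed

definition poly2_degree_le :: "nat \<Rightarrow> (complex \<Rightarrow> complex \<Rightarrow> complex) \<Rightarrow> bool" where
  "poly2_degree_le n h \<longleftrightarrow>
     (\<exists>c. finite (supp2 c) \<and> (\<forall>i j. c i j \<noteq> 0 \<longrightarrow> i + j \<le> n) \<and> h = poly2 c)"

lemma poly2_degree_le_monomials:
  assumes "finite A" "inj_on \<phi> A" "\<And>x. x \<in> A \<Longrightarrow> fst (\<phi> x) + snd (\<phi> x) \<le> n"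
  shows "poly2_degree_le n (\<lambda>s t. \<Sum>x\<in>A. g x * s ^ fst (\<phi> x) * t ^ snd (\<phi> x))"
  unfolding poly2_degree_le_def
proof (intro exI conjI allI impI)
  show "finite (supp2 (monomial_coeffs \<phi> A g))"
    using assms(1) by (rule finite_supp2_monomial_coeffs)
  show "i + j \<le> n" if "monomial_coeffs \<phi> A g i j \<noteq> 0" for i j
    using monomial_coeffs_nonzeroE[OF assms(2) that] assms(3) by (metis fst_conv snd_conv)
  show "(\<lambda>s t. \<Sum>x\<in>A. g x * s ^ fst (\<phi> x) * t ^ snd (\<phi> x)) = poly2 (monomial_coeffs \<phi> A g)"
    using poly2_monomial_coeffs[OF assms(1,2)] by (simp add: fun_eq_iff)
qed

lemma poly2_degree_le_swap:
  assumes "poly2_degree_le n h"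
  shows "poly2_degree_le n (\<lambda>s t. h t s)"
proof -
  obtain c where c: "finite (supp2 c)" "\<forall>i j. c i j \<noteq> 0 \<longrightarrow> i + j \<le> n" "h = poly2 c"
    using assms unfolding poly2_degree_le_def by blast
  have "poly2_degree_le n (\<lambda>s t. \<Sum>x\<in>supp2 c. case_prod c x * s ^ fst (prod.swap x) * t ^ snd (prod.swap x))"
    using c(1,2) by (intro poly2_degree_le_monomials) (auto simp: supp2_def add.commute)
  moreover have "h t s = (\<Sum>x\<in>supp2 c. case_prod c x * s ^ fst (prod.swap x) * t ^ snd (prod.swap x))" for s t
    unfolding c(3) poly2_supp2 by (intro sum.cong) (auto simp: mult_ac)
  ultimately show ?thesis
    by simp
qed

lemma poly2_shift_snd:
  assumes "finite (supp2 c)"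
  obtains d where "finite (supp2 d)" "\<And>s t. poly2 c s (b + t) = poly2 d s t"
    "\<And>i l. d i l \<noteq> 0 \<Longrightarrow> \<exists>j\<ge>l. c i j \<noteq> 0"
    "\<And>i l. \<forall>j>l. c i j = 0 \<Longrightarrow> d i l = c i l"
proof -
  obtain N where N: "supp2 c \<subseteq> {..N} \<times> {..N}"
    using finite_supp2_bounded[OF assms] .
  define d where "d i l = (\<Sum>j\<le>N. c i j * of_nat (j choose l) * b ^ (j - l))" for i l
  have d_nonzero: "\<exists>j\<ge>l. c i j \<noteq> 0" if "d i l \<noteq> 0" for i l
    using sum.not_neutral_contains_not_neutral[OF that[unfolded d_def]]
    by (metis binomial_eq_0 mult_eq_0_iff not_le of_nat_eq_0_iff)
  have dN: "supp2 d \<subseteq> {..N} \<times> {..N}"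
    using N d_nonzero by (fastforce simp: supp2_def)
  moreover have "poly2 c s (b + t) = poly2 d s t" for s t
  proof -
    have binom: "(b + t) ^ j = (\<Sum>l\<le>N. of_nat (j choose l) * b ^ (j - l) * t ^ l)" if "j \<le> N" for j
    proof -
      have "(b + t) ^ j = (\<Sum>l\<le>j. of_nat (j choose l) * t ^ l * b ^ (j - l))"
        using binomial_ring[of t b j] by (simp add: add.commute)
      also have "\<dots> = (\<Sum>l\<le>N. of_nat (j choose l) * t ^ l * b ^ (j - l))"
        using that by (intro sum.mono_neutral_left) auto
      finally show ?thesis
        by (simp add: mult_ac)
    qed
    have "poly2 c s (b + t) = (\<Sum>i\<le>N. \<Sum>j\<le>N. c i j * s ^ i * (b + t) ^ j)"
      by (simp add: poly2_eq_sum_superset[OF _ N] sum.cartesian_product)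
    also have "\<dots> = (\<Sum>i\<le>N. \<Sum>j\<le>N. \<Sum>l\<le>N. c i j * of_nat (j choose l) * b ^ (j - l) * s ^ i * t ^ l)"
      by (simp add: binom sum_distrib_left mult_ac)
    also have "\<dots> = (\<Sum>i\<le>N. \<Sum>l\<le>N. d i l * s ^ i * t ^ l)"
      unfolding d_def sum_distrib_right by (intro sum.cong refl sum.swap)
    also have "\<dots> = poly2 d s t"
      by (simp add: poly2_eq_sum_superset[OF _ dN] sum.cartesian_product)
    finally show ?thesis .
  qed
  moreover have "d i l = c i l" if "\<forall>j>l. c i j = 0" for i l
  proof -
    have "d i l = (\<Sum>j\<le>N. if j = l then c i l else 0)"
      unfolding d_def using that by (intro sum.cong) (auto simp: binomial_eq_0 not_less)
    then show ?thesis
      using N by (auto simp: supp2_def)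
  qed
  ultimately show ?thesis
    using that d_nonzero finite_subset[OF dN] by blast
qed

lemma poly2_degree_le_shift_snd:
  assumes "poly2_degree_le n h"
  shows "poly2_degree_le n (\<lambda>s t. h s (b + t))"
proof -
  obtain c where c: "finite (supp2 c)" "\<forall>i j. c i j \<noteq> 0 \<longrightarrow> i + j \<le> n" "h = poly2 c"
    using assms unfolding poly2_degree_le_def by blast
  obtain d where d: "finite (supp2 d)" "\<And>s t. poly2 c s (b + t) = poly2 d s t"
      "\<And>i l. d i l \<noteq> 0 \<Longrightarrow> \<exists>j\<ge>l. c i j \<noteq> 0"
    using poly2_shift_snd[OF c(1)] by metis
  have "i + l \<le> n" if "d i l \<noteq> 0" for i l
    using d(3)[OF that] c(2) by fastforce
  then show ?thesis
    unfolding poly2_degree_le_def using c(3) d(1,2) by (auto simp: fun_eq_iff)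
qed

lemma poly2_degree_le_shift:
  assumes "poly2_degree_le n h"
  shows "poly2_degree_le n (\<lambda>s t. h (a + s) (b + t))"
  using poly2_degree_le_swap[OF poly2_degree_le_shift_snd[OF
      poly2_degree_le_swap[OF poly2_degree_le_shift_snd[OF assms, where b = b]], where b = a]]
  by simp

lemma hom_poly_scale:
  assumes "hom_poly n F"
  shows "F (l * x) (l * y) (l * z) = l ^ n * F x y z"
proof -
  obtain C where C: "F = (\<lambda>x y z. \<Sum>(i, j)\<in>{(i, j). i + j \<le> n}. C i j * x ^ i * y ^ j * z ^ (n - i - j))"
    using assms unfolding hom_poly_def by blast
  have "l ^ n = l ^ i * l ^ j * l ^ (n - i - j)" if "i + j \<le> n" for i j
    using that by (simp flip: power_add)
  then show ?thesis
    unfolding C sum_distrib_left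
    by (intro sum.cong) (auto simp: power_mult_distrib mult_ac)
qed

lemma isCont_hom_poly_line:
  assumes "hom_poly n F"
  shows "isCont (\<lambda>\<epsilon>. F (x + \<epsilon> * d0) (y + \<epsilon> * d1) (z + \<epsilon> * d2)) \<epsilon>0"
proof -
  obtain C where C: "F = (\<lambda>x y z. \<Sum>(i, j)\<in>{(i, j). i + j \<le> n}. C i j * x ^ i * y ^ j * z ^ (n - i - j))"
    using assms unfolding hom_poly_def by blast
  show ?thesis
    unfolding C by (auto simp: case_prod_unfold intro!: continuous_intros)
qed

lemma finite_pairs_sum_le: "finite {(i, j). i + j \<le> (n::nat)}"
  by (rule finite_subset[of _ "{..n} \<times> {..n}"]) auto

lemma poly2_degree_le_dehomogenise:
  assumes "hom_poly n F"
  shows "poly2_degree_le n (\<lambda>y z. F 1 y z)" "poly2_degree_le n (\<lambda>x z. F x 1 z)"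
    "poly2_degree_le n (\<lambda>x y. F x y 1)"
proof -
  let ?T = "{(i, j). i + j \<le> n}"
  obtain C where C: "F = (\<lambda>x y z. \<Sum>(i, j)\<in>?T. C i j * x ^ i * y ^ j * z ^ (n - i - j))"
    using assms unfolding hom_poly_def by blast
  have monomials: "poly2_degree_le n (\<lambda>s t. \<Sum>x\<in>?T. case_prod C x * s ^ fst (\<phi> x) * t ^ snd (\<phi> x))"
    if "inj_on \<phi> ?T" "\<And>x. x \<in> ?T \<Longrightarrow> fst (\<phi> x) + snd (\<phi> x) \<le> n" for \<phi>
    using finite_pairs_sum_le that by (rule poly2_degree_le_monomials)
  have "poly2_degree_le n (\<lambda>s t. \<Sum>x\<in>?T. case_prod C x * s ^ fst (\<phi> x) * t ^ snd (\<phi> x))"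
    if "\<phi> = (\<lambda>(i, j). (j, n - i - j))" for \<phi>
    using that by (intro monomials) (auto simp: inj_on_def)
  then show "poly2_degree_le n (\<lambda>y z. F 1 y z)"
    unfolding C by (simp add: case_prod_unfold)
  have "poly2_degree_le n (\<lambda>s t. \<Sum>x\<in>?T. case_prod C x * s ^ fst (\<phi> x) * t ^ snd (\<phi> x))"
    if "\<phi> = (\<lambda>(i, j). (i, n - i - j))" for \<phi>
    using that by (intro monomials) (auto simp: inj_on_def)
  then show "poly2_degree_le n (\<lambda>x z. F x 1 z)"
    unfolding C by (simp add: case_prod_unfold)
  have "poly2_degree_le n (\<lambda>s t. \<Sum>x\<in>?T. case_prod C x * s ^ fst (id x) * t ^ snd (id x))"
    by (intro monomials) auto
  then show "poly2_degree_le n (\<lambda>x y. F x y 1)"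
    unfolding C by (simp add: case_prod_unfold)
qed

lemma poly2_degree_le_chart_eq:
  assumes "hom_poly n F"
  shows "poly2_degree_le n (chart_eq F p)"
proof -
  obtain p0 p1 p2 where p: "p = (p0, p1, p2)"
    by (cases p)
  note dehom = poly2_degree_le_dehomogenise[OF assms]
  show ?thesis
    using poly2_degree_le_shift[OF dehom(1), of "p1 / p0" "p2 / p0"]
      poly2_degree_le_shift[OF dehom(2), of 0 "p2 / p1"] dehom(3)
    by (auto simp: p chart_eq_def)
qed

definition linf :: "pt3 \<Rightarrow> form3" where
  "linf l x y z = fst l * x + fst (snd l) * y + snd (snd l) * z"

definition lin_comb :: "complex \<Rightarrow> complex \<Rightarrow> pt3 \<Rightarrow> pt3 \<Rightarrow> pt3" where
  "lin_comb \<alpha> \<beta> l m =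
     (\<alpha> * fst l + \<beta> * fst m, \<alpha> * fst (snd l) + \<beta> * fst (snd m), \<alpha> * snd (snd l) + \<beta> * snd (snd m))"

lemma linf_lin_comb: "linf (lin_comb \<alpha> \<beta> l m) x y z = \<alpha> * linf l x y z + \<beta> * linf m x y z"
  by (simp add: linf_def lin_comb_def algebra_simps)

(* L0 = 1 is the affine chart containing p, and L1, L2 are its coordinates centred at p. *)
lemma chart_eq_rehomogenise:
  assumes "hom_poly n F"
  obtains L0 L1 L2 d where
    "\<And>x y z. linf L0 x y z \<noteq> 0 \<Longrightarrow> F x y z = linf L0 x y z ^ n *
        chart_eq F p (linf L1 x y z / linf L0 x y z) (linf L2 x y z / linf L0 x y z)"
    "eval3 (linf L0) d = 1" "eval3 (linf L1) p = 0" "eval3 (linf L2) p = 0"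
    "\<And>\<alpha> \<beta>. (\<alpha>, \<beta>) \<noteq> (0, 0) \<Longrightarrow> lin_comb \<alpha> \<beta> L1 L2 \<noteq> (0, 0, 0)"
proof -
  obtain p0 p1 p2 where p: "p = (p0, p1, p2)"
    by (cases p)
  consider "p0 \<noteq> 0" | "p0 = 0" "p1 \<noteq> 0" | "p0 = 0" "p1 = 0"
    by blast
  then show ?thesis
  proof cases
    case 1
    show ?thesis
    proof (rule that[of "(1, 0, 0)" "(- p1 / p0, 1, 0)" "(- p2 / p0, 0, 1)" "(1, 0, 0)"])
      fix x y z :: complex
      assume "linf (1, 0, 0) x y z \<noteq> 0"
      then have "x \<noteq> 0"
        by (simp add: linf_def)
      then have "F x y z = F (x * 1) (x * (y / x)) (x * (z / x))"
        by simp
      also have "\<dots> = x ^ n * F 1 (y / x) (z / x)"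
        by (rule hom_poly_scale[OF assms])
      finally show "F x y z = linf (1, 0, 0) x y z ^ n * chart_eq F p
          (linf (- p1 / p0, 1, 0) x y z / linf (1, 0, 0) x y z)
          (linf (- p2 / p0, 0, 1) x y z / linf (1, 0, 0) x y z)"
        using 1 \<open>x \<noteq> 0\<close> by (simp add: p chart_eq_def linf_def diff_divide_distrib)
    qed (use 1 in \<open>auto simp: p linf_def eval3_def lin_comb_def\<close>)
  next
    case 2
    show ?thesis
    proof (rule that[of "(0, 1, 0)" "(1, 0, 0)" "(0, - p2 / p1, 1)" "(0, 1, 0)"])
      fix x y z :: complex
      assume "linf (0, 1, 0) x y z \<noteq> 0"
      then have "y \<noteq> 0"
        by (simp add: linf_def)
      then have "F x y z = F (y * (x / y)) (y * 1) (y * (z / y))"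
        by simp
      also have "\<dots> = y ^ n * F (x / y) 1 (z / y)"
        by (rule hom_poly_scale[OF assms])
      finally show "F x y z = linf (0, 1, 0) x y z ^ n * chart_eq F p
          (linf (1, 0, 0) x y z / linf (0, 1, 0) x y z)
          (linf (0, - p2 / p1, 1) x y z / linf (0, 1, 0) x y z)"
        using 2 \<open>y \<noteq> 0\<close> by (simp add: p chart_eq_def linf_def diff_divide_distrib)
    qed (use 2 in \<open>auto simp: p linf_def eval3_def lin_comb_def\<close>)
  next
    case 3
    show ?thesis
    proof (rule that[of "(0, 0, 1)" "(1, 0, 0)" "(0, 1, 0)" "(0, 0, 1)"])
      fix x y z :: complex
      assume "linf (0, 0, 1) x y z \<noteq> 0"
      then have "z \<noteq> 0"
        by (simp add: linf_def)
      then have "F x y z = F (z * (x / z)) (z * (y / z)) (z * 1)"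
        by simp
      also have "\<dots> = z ^ n * F (x / z) (y / z) 1"
        by (rule hom_poly_scale[OF assms])
      finally show "F x y z = linf (0, 0, 1) x y z ^ n * chart_eq F p
          (linf (1, 0, 0) x y z / linf (0, 0, 1) x y z)
          (linf (0, 1, 0) x y z / linf (0, 0, 1) x y z)"
        using 3 by (simp add: p chart_eq_def linf_def)
    qed (use 3 in \<open>auto simp: p linf_def eval3_def lin_comb_def\<close>)
  qed
qed

lemma eq_at_if_isCont_eq_punctured:
  fixes f g :: "complex \<Rightarrow> complex"
  assumes "isCont f a" "isCont g a" "\<And>x. x \<noteq> a \<Longrightarrow> f x = g x"
  shows "f a = g a"
proof -
  have "g \<midarrow>a\<rightarrow> f a"
    using assms(1,3) LIM_cong[of a a f g] unfolding isCont_def by blast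
  then show ?thesis
    using assms(2) LIM_unique unfolding isCont_def by blast
qed

lemma eq_if_eq_off_hyperplane:
  fixes F G :: form3
  assumes "\<And>x y z. linf L x y z \<noteq> 0 \<Longrightarrow> F x y z = G x y z"
    and "eval3 (linf L) (d0, d1, d2) = 1"
    and "\<And>x y z. isCont (\<lambda>\<epsilon>. F (x + \<epsilon> * d0) (y + \<epsilon> * d1) (z + \<epsilon> * d2)) 0"
    and "\<And>x y z. isCont (\<lambda>\<epsilon>. G (x + \<epsilon> * d0) (y + \<epsilon> * d1) (z + \<epsilon> * d2)) 0"
  shows "F = G"
proof (intro ext)
  fix x y z
  let ?f = "\<lambda>\<epsilon>. F (x + \<epsilon> * d0) (y + \<epsilon> * d1) (z + \<epsilon> * d2)"
  let ?g = "\<lambda>\<epsilon>. G (x + \<epsilon> * d0) (y + \<epsilon> * d1) (z + \<epsilon> * d2)"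
  show "F x y z = G x y z"
  proof (cases "linf L x y z = 0")
    case True
    have "linf L (x + \<epsilon> * d0) (y + \<epsilon> * d1) (z + \<epsilon> * d2)
        = linf L x y z + \<epsilon> * eval3 (linf L) (d0, d1, d2)" for \<epsilon>
      by (simp add: linf_def eval3_def algebra_simps)
    then have "linf L (x + \<epsilon> * d0) (y + \<epsilon> * d1) (z + \<epsilon> * d2) = \<epsilon>" for \<epsilon>
      using True assms(2) by simp
    then have "?f \<epsilon> = ?g \<epsilon>" if "\<epsilon> \<noteq> 0" for \<epsilon>
      using assms(1) that by metis
    then have "?f 0 = ?g 0"
      using assms(3,4) by (rule eq_at_if_isCont_eq_punctured[rotated 2])
    then show ?thesis
      by simp
  qed (use assms(1) in blast)
qed

lemma chart_eq_not_identically_zero: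
  assumes "hom_poly n F" "F \<noteq> (\<lambda>x y z. 0)"
  shows "\<exists>u v. chart_eq F p u v \<noteq> 0"
proof (rule ccontr)
  assume "\<not> ?thesis"
  then have chart_zero: "chart_eq F p u v = 0" for u v
    by blast
  obtain L0 L1 L2 d0 d1 d2 where
    rehom: "\<And>x y z. linf L0 x y z \<noteq> 0 \<Longrightarrow> F x y z = linf L0 x y z ^ n *
        chart_eq F p (linf L1 x y z / linf L0 x y z) (linf L2 x y z / linf L0 x y z)"
    and "eval3 (linf L0) (d0, d1, d2) = 1"
    using chart_eq_rehomogenise[OF assms(1)] by (metis prod.collapse)
  have "F = (\<lambda>x y z. 0)"
    by (rule eq_if_eq_off_hyperplane[of L0 _ _ d0 d1 d2])
      (use rehom chart_zero \<open>eval3 _ _ = 1\<close> isCont_hom_poly_line[OF assms(1)] in auto)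
  with assms(2) show False ..
qed

lemma mult_P2_coeffs:
  assumes "hom_poly n F" "F \<noteq> (\<lambda>x y z. 0)"
  obtains e where "finite (supp2 e)" "\<And>i j. e i j \<noteq> 0 \<Longrightarrow> i + j \<le> n" "chart_eq F p = poly2 e"
    "\<And>i j. e i j \<noteq> 0 \<Longrightarrow> mult_P2 F p \<le> i + j" "\<exists>i j. e i j \<noteq> 0 \<and> i + j = mult_P2 F p"
proof -
  obtain e where e: "finite (supp2 e)" "\<forall>i j. e i j \<noteq> 0 \<longrightarrow> i + j \<le> n" "chart_eq F p = poly2 e"
    using poly2_degree_le_chart_eq[OF assms(1)] unfolding poly2_degree_le_def by blast
  obtain u v where "poly2 e u v \<noteq> 0"
    using chart_eq_not_identically_zero[OF assms] e(3) by metis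
  then have "supp2 e \<noteq> {}"
    by (auto simp: poly2_supp2)
  then obtain i j where "e i j \<noteq> 0"
    by (auto simp: supp2_def)
  moreover have expansion: "chart_eq F p (0 + s) (0 + t) = poly2 e s t" for s t
    using e(3) by simp
  ultimately show ?thesis
    using that[OF e(1)] e(2,3) ord_at_le[OF e(1) expansion] ord_at_attained[OF e(1) expansion]
    unfolding mult_P2_def by metis
qed

lemma mult_P2_le_degree:
  assumes "hom_poly n F" "F \<noteq> (\<lambda>x y z. 0)"
  shows "mult_P2 F p \<le> n"
  using mult_P2_coeffs[OF assms, of p] by metis

lemma ord_at_blowup_fst_le:
  assumes "finite (supp2 e)" "h = poly2 e" "e i j \<noteq> 0"
  shows "ord_at (\<lambda>s t. h s (s * t)) 0 b \<le> 2 * ord_at h 0 0"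
proof -
  define m where "m = ord_at h 0 0"
  have expansion: "h (0 + s) (0 + t) = poly2 e s t" for s t
    using assms(2) by simp
  obtain i0 j0 where ij0: "e i0 j0 \<noteq> 0" "i0 + j0 = m"
    using ord_at_attained[OF assms(1) expansion assms(3)] unfolding m_def by metis
  let ?\<phi> = "\<lambda>(i, j). (i + j, j)"
  define c where "c = monomial_coeffs ?\<phi> (supp2 e) (case_prod e)"
  have inj: "inj_on ?\<phi> (supp2 e)"
    by (auto simp: inj_on_def)
  have c_finite: "finite (supp2 c)"
    unfolding c_def using assms(1) by (rule finite_supp2_monomial_coeffs)
  have c_expansion: "h s (s * w) = poly2 c s w" for s w
  proof -
    have "h s (s * w) = (\<Sum>(i, j)\<in>supp2 e. e i j * s ^ (i + j) * w ^ j)"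
      unfolding assms(2) poly2_supp2 by (intro sum.cong) (auto simp: power_add power_mult_distrib)
    then show ?thesis
      unfolding c_def poly2_monomial_coeffs[OF assms(1) inj] by (simp add: case_prod_unfold)
  qed
  have row_m: "j \<le> m" if nonzero: "c m j \<noteq> 0" for j
  proof -
    obtain x where "x \<in> supp2 e" "?\<phi> x = (m, j)" "case_prod e x \<noteq> 0"
      by (rule monomial_coeffs_nonzeroE[OF inj nonzero[unfolded c_def]])
    then show ?thesis
      by (cases x) auto
  qed
  have "c m j0 = e i0 j0"
    unfolding c_def using ij0 by (subst monomial_coeffs_eq[OF inj, of "(i0, j0)"]) (auto simp: supp2_def)
  then have j0_in_row: "j0 \<in> {j. c m j \<noteq> 0}"
    using ij0 by simp
  have "{j. c m j \<noteq> 0} \<subseteq> {..m}"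
    using row_m by blast
  then have row_finite: "finite {j. c m j \<noteq> 0}"
    by (rule finite_subset) simp
  \<comment> \<open>J is chosen maximal so that recentring t leaves the coefficient of s^m t^J unchanged.\<close>
  define J where "J = Max {j. c m j \<noteq> 0}"
  have "J \<in> {j. c m j \<noteq> 0}"
    unfolding J_def using row_finite j0_in_row by (intro Max_in) blast+
  then have J: "c m J \<noteq> 0" "J \<le> m"
    using row_m by auto
  have J_top: "\<forall>j>J. c m j = 0"
    using Max_ge[OF row_finite] unfolding J_def by force
  obtain d where d: "finite (supp2 d)" "\<And>s t. poly2 c s (b + t) = poly2 d s t"
      "\<And>i l. d i l \<noteq> 0 \<Longrightarrow> \<exists>j\<ge>l. c i j \<noteq> 0" "\<And>i l. \<forall>j>l. c i j = 0 \<Longrightarrow> d i l = c i l"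
    using poly2_shift_snd[OF c_finite, where b = b] by blast
  have "(\<lambda>s t. h s (s * t)) (0 + s) (b + t) = poly2 d s t" for s t
    using c_expansion d(2) by simp
  moreover have "d m J \<noteq> 0"
    using d(4)[OF J_top] J(1) by simp
  ultimately have "ord_at (\<lambda>s t. h s (s * t)) 0 b \<le> m + J"
    by (rule ord_at_le[OF d(1)])
  with J(2) show ?thesis
    unfolding m_def by simp
qed

lemma ord_at_blowup_snd_le:
  assumes "finite (supp2 e)" "h = poly2 e" "e i j \<noteq> 0"
  shows "ord_at (\<lambda>s t. h (s * t) t) 0 0 \<le> 2 * ord_at h 0 0"
proof -
  have expansion: "h (0 + s) (0 + t) = poly2 e s t" for s t
    using assms(2) by simp
  obtain i0 j0 where ij0: "e i0 j0 \<noteq> 0" "i0 + j0 = ord_at h 0 0"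
    using ord_at_attained[OF assms(1) expansion assms(3)] by metis
  let ?\<phi> = "\<lambda>(i, j). (i, i + j)"
  define c where "c = monomial_coeffs ?\<phi> (supp2 e) (case_prod e)"
  have inj: "inj_on ?\<phi> (supp2 e)"
    by (auto simp: inj_on_def)
  have c_finite: "finite (supp2 c)"
    unfolding c_def using assms(1) by (rule finite_supp2_monomial_coeffs)
  have "(\<lambda>s t. h (s * t) t) (0 + s) (0 + t) = poly2 c s t" for s t
  proof -
    have "h (s * t) t = (\<Sum>(i, j)\<in>supp2 e. e i j * s ^ i * t ^ (i + j))"
      unfolding assms(2) poly2_supp2 by (intro sum.cong) (auto simp: power_add power_mult_distrib)
    then show ?thesis
      unfolding c_def poly2_monomial_coeffs[OF assms(1) inj] by (simp add: case_prod_unfold)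
  qed
  moreover have "c i0 (i0 + j0) \<noteq> 0"
    unfolding c_def using ij0 by (subst monomial_coeffs_eq[OF inj]) (auto simp: supp2_def)
  ultimately have "ord_at (\<lambda>s t. h (s * t) t) 0 0 \<le> i0 + (i0 + j0)"
    by (rule ord_at_le[OF c_finite])
  with ij0(2) show ?thesis
    by simp
qed

lemma mult_Sr_exc_le:
  assumes "hom_poly n F" "F \<noteq> (\<lambda>x y z. 0)"
  shows "mult_Sr k F P (Exc i d) \<le> 2 * int (mult_P2 F (P i)) - int k"
proof -
  obtain e i' j' where "finite (supp2 e)" "chart_eq F (P i) = poly2 e" "e i' j' \<noteq> 0"
    using mult_P2_coeffs[OF assms, of "P i"] by metis
  note expansion = this
  show ?thesis
  proof (cases d)
    case (Pair \<alpha> \<beta>)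
    then show ?thesis
      using ord_at_blowup_fst_le[OF expansion, of "\<beta> / \<alpha>"] ord_at_blowup_snd_le[OF expansion]
      by (simp add: mult_Sr_def mult_P2_def)
  qed
qed

lemma binary_form_splits:
  fixes h :: "nat \<Rightarrow> complex"
  assumes "h i0 \<noteq> 0" "i0 \<le> n"
  obtains c ps where "c \<noteq> 0" "\<And>\<alpha> \<beta>. (\<alpha>, \<beta>) \<in> set ps \<Longrightarrow> (\<alpha>, \<beta>) \<noteq> (0, 0)"
    "\<And>U V. (\<Sum>i\<le>n. h i * U ^ i * V ^ (n - i)) = c * (\<Prod>(\<alpha>, \<beta>)\<leftarrow>ps. \<alpha> * U + \<beta> * V)"
proof -
  define p where "p = (\<Sum>i\<le>n. monom (h i) i)"
  have poly_p: "poly p X = (\<Sum>i\<le>n. h i * X ^ i)" for X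
    unfolding p_def by (simp add: poly_sum poly_monom)
  have coeff_p: "coeff p i = (if i \<le> n then h i else 0)" for i
    unfolding p_def by (simp add: coeff_sum coeff_monom)
  then have "p \<noteq> 0"
    using assms by (metis coeff_0)
  define d where "d = degree p"
  have "d \<le> n"
    unfolding d_def by (rule degree_le) (simp add: coeff_p)
  obtain root where root: "smult (lead_coeff p) (\<Prod>i<d. [:- root i, 1:]) = p"
    unfolding d_def using complex_poly_decompose' by blast
  define c where "c = lead_coeff p"
  have "c \<noteq> 0"
    using \<open>p \<noteq> 0\<close> by (simp add: c_def)
  define ps where "ps = map (\<lambda>i. (1 :: complex, - root i)) [0..<d] @ replicate (n - d) (0, 1)"
  have ps_nonzero: "(\<alpha>, \<beta>) \<noteq> (0, 0)" if "(\<alpha>, \<beta>) \<in> set ps" for \<alpha> \<beta>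
    using that by (auto simp: ps_def)
  have prod_ps: "(\<Prod>(\<alpha>, \<beta>)\<leftarrow>ps. \<alpha> * U + \<beta> * V) = (\<Prod>i<d. U - root i * V) * V ^ (n - d)" for U V
    by (simp add: ps_def o_def prod.distinct_set_conv_list[symmetric] atLeast0LessThan)
  have off_zero: "(\<Sum>i\<le>n. h i * U ^ i * V ^ (n - i)) = c * ((\<Prod>i<d. U - root i * V) * V ^ (n - d))"
    if "V \<noteq> 0" for U V
  proof -
    have "(\<Sum>i\<le>n. h i * U ^ i * V ^ (n - i)) = V ^ n * poly p (U / V)"
      unfolding poly_p sum_distrib_left
      using that by (intro sum.cong) (auto simp: power_divide field_simps simp flip: power_add)
    also have "poly p (U / V) = c * (\<Prod>i<d. U / V - root i)"
      by (subst root[symmetric]) (simp add: c_def poly_prod)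
    also have "(\<Prod>i<d. U / V - root i) = (\<Prod>i<d. (U - root i * V) / V)"
      using that by (intro prod.cong) (auto simp: field_simps)
    also have "\<dots> = (\<Prod>i<d. U - root i * V) / V ^ d"
      by (simp add: prod_dividef)
    also have "V ^ n = V ^ d * V ^ (n - d)"
      using \<open>d \<le> n\<close> by (simp flip: power_add)
    finally show ?thesis
      using that by simp
  qed
  have expansion: "(\<Sum>i\<le>n. h i * U ^ i * V ^ (n - i)) = c * ((\<Prod>i<d. U - root i * V) * V ^ (n - d))"
    for U V
  proof (cases "V = 0")
    case True
    have "(\<lambda>V. \<Sum>i\<le>n. h i * U ^ i * V ^ (n - i)) 0 = (\<lambda>V. c * ((\<Prod>i<d. U - root i * V) * V ^ (n - d))) 0"
      by (rule eq_at_if_isCont_eq_punctured) (auto intro!: continuous_intros simp: off_zero)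
    with True show ?thesis
      by simp
  qed (rule off_zero)
  show ?thesis
    using that[OF \<open>c \<noteq> 0\<close> ps_nonzero] expansion prod_ps by simp
qed

lemma union_of_lines_through_binary_form:
  assumes "h i0 \<noteq> 0" "i0 \<le> n"
    and F: "\<And>x y z. F x y z = (\<Sum>i\<le>n. h i * linf L1 x y z ^ i * linf L2 x y z ^ (n - i))"
    and "eval3 (linf L1) q = 0" "eval3 (linf L2) q = 0"
    and independent: "\<And>\<alpha> \<beta>. (\<alpha>, \<beta>) \<noteq> (0, 0) \<Longrightarrow> lin_comb \<alpha> \<beta> L1 L2 \<noteq> (0, 0, 0)"
  shows "union_of_lines_through F q"
proof -
  obtain c ps where "c \<noteq> 0" and ps: "\<And>\<alpha> \<beta>. (\<alpha>, \<beta>) \<in> set ps \<Longrightarrow> (\<alpha>, \<beta>) \<noteq> (0, 0)"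
    and split: "\<And>U V. (\<Sum>i\<le>n. h i * U ^ i * V ^ (n - i)) = c * (\<Prod>(\<alpha>, \<beta>)\<leftarrow>ps. \<alpha> * U + \<beta> * V)"
    using binary_form_splits[of h i0 n, OF assms(1,2)] by blast
  define ls where "ls = map (\<lambda>(\<alpha>, \<beta>). lin_comb \<alpha> \<beta> L1 L2) ps"
  have linf_eq: "linf l = (\<lambda>x y z. fst l * x + fst (snd l) * y + snd (snd l) * z)" for l
    by (simp add: linf_def fun_eq_iff)
  have "l \<noteq> (0, 0, 0) \<and> eval3 (linf l) q = 0" if "l \<in> set ls" for l
    using that ps independent assms(4,5)
    by (auto simp: ls_def eval3_def linf_lin_comb split: prod.splits)
  moreover have "F = (\<lambda>x y z. c * (\<Prod>l\<leftarrow>ls. linf l x y z))"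
    unfolding fun_eq_iff F split ls_def by (simp add: o_def case_prod_unfold linf_lin_comb)
  ultimately show ?thesis
    unfolding union_of_lines_through_def using \<open>c \<noteq> 0\<close>
    by (intro exI[of _ c] exI[of _ ls] conjI) (auto simp: linf_eq)
qed

lemma union_of_lines_through_if_mult_eq_degree:
  assumes hom: "hom_poly n F" and "F \<noteq> (\<lambda>x y z. 0)" and "mult_P2 F p = n"
  shows "union_of_lines_through F p"
proof -
  obtain e where e: "finite (supp2 e)" "\<And>i j. e i j \<noteq> 0 \<Longrightarrow> i + j \<le> n" "chart_eq F p = poly2 e"
      "\<And>i j. e i j \<noteq> 0 \<Longrightarrow> n \<le> i + j" "\<exists>i j. e i j \<noteq> 0 \<and> i + j = n"
    using mult_P2_coeffs[OF assms(1,2), of p] assms(3) by metis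
  define H where "H U V = (\<Sum>i\<le>n. e i (n - i) * U ^ i * V ^ (n - i))" for U V
  have chart_H: "chart_eq F p u v = H u v" for u v
  proof -
    have "supp2 e \<subseteq> (\<lambda>i. (i, n - i)) ` {..n}"
      using e(2,4) by (force simp: supp2_def)
    then have "poly2 e u v = (\<Sum>(i, j)\<in>(\<lambda>i. (i, n - i)) ` {..n}. e i j * u ^ i * v ^ j)"
      by (intro poly2_eq_sum_superset) auto
    also have "\<dots> = H u v"
      unfolding H_def by (subst sum.reindex) (auto simp: inj_on_def)
    finally show ?thesis
      using e(3) by simp
  qed
  have H_hom: "H (l * U) (l * V) = l ^ n * H U V" for l U V
    unfolding H_def sum_distrib_left
    by (intro sum.cong) (auto simp: power_mult_distrib mult_ac simp flip: power_add)
  obtain L0 L1 L2 d0 d1 d2 where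
    rehom: "\<And>x y z. linf L0 x y z \<noteq> 0 \<Longrightarrow> F x y z = linf L0 x y z ^ n *
        chart_eq F p (linf L1 x y z / linf L0 x y z) (linf L2 x y z / linf L0 x y z)"
    and L0: "eval3 (linf L0) (d0, d1, d2) = 1"
    and L12: "eval3 (linf L1) p = 0" "eval3 (linf L2) p = 0"
      "\<And>\<alpha> \<beta>. (\<alpha>, \<beta>) \<noteq> (0, 0) \<Longrightarrow> lin_comb \<alpha> \<beta> L1 L2 \<noteq> (0, 0, 0)"
    using chart_eq_rehomogenise[OF hom] by (metis prod.collapse)
  have "F = (\<lambda>x y z. H (linf L1 x y z) (linf L2 x y z))"
  proof (rule eq_if_eq_off_hyperplane[OF _ L0])
    fix x y z
    assume "linf L0 x y z \<noteq> 0"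
    then show "F x y z = H (linf L1 x y z) (linf L2 x y z)"
      using rehom chart_H H_hom[of "linf L0 x y z" "linf L1 x y z / linf L0 x y z"
          "linf L2 x y z / linf L0 x y z"] by simp
  qed (auto simp: H_def linf_def intro!: continuous_intros isCont_hom_poly_line[OF hom])
  moreover obtain i0 where "e i0 (n - i0) \<noteq> 0" "i0 \<le> n"
    using e(5) by (metis add_diff_cancel_left' le_add1)
  ultimately show ?thesis
    using L12 by (intro union_of_lines_through_binary_form[of "\<lambda>i. e i (n - i)" i0 n F L1 L2 p])
      (auto simp: H_def)
qed

theorem lemma2:
  fixes r k :: nat and P :: "nat \<Rightarrow> pt3" and F :: form3 and Q :: bpt
  assumes "1 \<le> r" and "r \<le> 8" and "general_position r P" and "0 < k"
    and "hom_poly (3 * k) F" and "F \<noteq> (\<lambda>x y z. 0)"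
    and "\<forall>i\<in>{1..r}. k \<le> mult_P2 F (P i)"
    and "point_of_Sr r P Q"
  shows "(on_exc Q \<longrightarrow> mult_Sr k F P Q \<le> 2 * int (mult_P2 F (fmap P Q)) - int k)
       \<and> (\<not> on_exc Q \<longrightarrow>
            mult_Sr k F P Q = int (mult_P2 F (fmap P Q))
          \<and> mult_P2 F (fmap P Q) \<le> 3 * k
          \<and> (mult_Sr k F P Q = int (3 * k) \<longrightarrow> union_of_lines_through F (fmap P Q)))"
proof (cases Q)
  case (Off q)
  have "mult_P2 F q \<le> 3 * k"
    using mult_P2_le_degree[OF assms(5,6)] .
  moreover have "mult_P2 F q = 3 * k \<Longrightarrow> union_of_lines_through F q"
    using union_of_lines_through_if_mult_eq_degree[OF assms(5,6)] .
  ultimately show ?thesis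
    by (simp add: Off on_exc_def mult_Sr_def fmap_def)
next
  case (Exc i d)
  then show ?thesis
    using mult_Sr_exc_le[OF assms(5,6)] by (simp add: on_exc_def fmap_def)
qed

end
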